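(* Let $T$ be a torus and $X$ a finite $T$-CW complex. For each $(q,u)\in\mathbb D^\times\times T_{\mathbb C}$ we have an equality \[ L(S^1\wedge X_+)^{q,u}=S^1\wedge LX^{q,u}_+ \] of subsets of $L(S^1\wedge X_+)$.
   Context: $\mathbb T=U(1)$, $T$ torus, $\check T=\mathrm{Hom}(\mathbb T,T)$, $T_{\mathbb C}=\check T\otimes\mathbb C^\times$, $\mathbb D^\times=\{z\in\mathbb C:0<|z|<1\}$. For a $T$-space $Z$, $LZ=\mathrm{Map}(\mathbb T,Z)$ with $\mathbb T\times T$ acting by $((r,u)\cdot\gamma)(s)=u\cdot\gamma(r^{-1}s)$. For $(q,u)$, $T(q,u)$ is the intersection of all closed subgroups $H\subset\mathbb T\times T$ with $(q,u)\in H_{\mathbb C}=\mathrm{Hom}(\hat H,\mathbb C^\times)\subset\mathbb C^\times\times T_{\mathbb C}$, and $W^{q,u}$ denotes the $T(q,u)$-fixed subspace of a $\mathbb T\times T$-space $W$. $S^1$ has trivial $T$-action, $X_+=X\sqcup\{\mathrm{pt}\}$, and $S^1\wedge LX^{q,u}_+$ is regarded as a subset of $L(S^1\wedge X_+)$ via $[z,\gamma]\mapsto(s\mapsto[z,\gamma(s)])$, the basepoint going to the constant loop at the basepoint. *)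

theory Defs
  imports "HOL-Analysis.Analysis"
begin

definition circle :: "complex set" where
  "circle = sphere 0 1"

(* A torus T of rank r, realised as U(1)^r: coordinates i < r on the unit circle,
   coordinates i \<ge> r frozen to 1. *)
definition torus :: "nat \<Rightarrow> (nat \<Rightarrow> complex) set" where
  "torus r = {u. (\<forall>i<r. cmod (u i) = 1) \<and> (\<forall>i\<ge>r. u i = 1)}"

(* T_\<complex> = Hom(\<T>,T) \<otimes> \<complex>^\<times> = (\<complex>^\<times>)^r, same coordinates. *)
definition torusC :: "nat \<Rightarrow> (nat \<Rightarrow> complex) set" where
  "torusC r = {u. (\<forall>i<r. u i \<noteq> 0) \<and> (\<forall>i\<ge>r. u i = 1)}"

definition tmul :: "(nat \<Rightarrow> complex) \<Rightarrow> (nat \<Rightarrow> complex) \<Rightarrow> nat \<Rightarrow> complex" where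
  "tmul u v = (\<lambda>i. u i * v i)"

definition tone :: "nat \<Rightarrow> complex" where
  "tone = (\<lambda>i. 1)"

definition tinv :: "(nat \<Rightarrow> complex) \<Rightarrow> nat \<Rightarrow> complex" where
  "tinv u = (\<lambda>i. inverse (u i))"

definition closed_subgroup_T :: "nat \<Rightarrow> (nat \<Rightarrow> complex) set \<Rightarrow> bool" where
  "closed_subgroup_T r H \<longleftrightarrow> H \<subseteq> torus r \<and> tone \<in> H \<and>
     (\<forall>a\<in>H. \<forall>b\<in>H. tmul a (tinv b) \<in> H) \<and> closed H"

definition closed_subgroup_TT :: "nat \<Rightarrow> (complex \<times> (nat \<Rightarrow> complex)) set \<Rightarrow> bool" where
  "closed_subgroup_TT r H \<longleftrightarrow> H \<subseteq> circle \<times> torus r \<and> (1, tone) \<in> H \<and>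
     (\<forall>p\<in>H. \<forall>p'\<in>H. (fst p / fst p', tmul (snd p) (tinv (snd p'))) \<in> H) \<and> closed H"

definition chi :: "nat \<Rightarrow> int \<Rightarrow> (nat \<Rightarrow> int) \<Rightarrow> complex \<times> (nat \<Rightarrow> complex) \<Rightarrow> complex" where
  "chi r m k p = fst p powi m * (\<Prod>i<r. snd p i powi k i)"

(* H_\<complex> = Hom(\<hat>H, \<complex>^\<times>) \<subseteq> \<complex>^\<times> \<times> T_\<complex>: the points on which every character of \<T> \<times> T
   that is trivial on H takes the value 1 (\<hat>H = characters of \<T>\<times>T modulo those trivial on H). *)
definition complexify :: "nat \<Rightarrow> (complex \<times> (nat \<Rightarrow> complex)) set \<Rightarrow> (complex \<times> (nat \<Rightarrow> complex)) set" where
  "complexify r H = {(q, u). q \<noteq> 0 \<and> u \<in> torusC r \<and>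
     (\<forall>m k. (\<forall>p\<in>H. chi r m k p = 1) \<longrightarrow> chi r m k (q, u) = 1)}"

definition Tqu :: "nat \<Rightarrow> complex \<Rightarrow> (nat \<Rightarrow> complex) \<Rightarrow> (complex \<times> (nat \<Rightarrow> complex)) set" where
  "Tqu r q u = \<Inter>{H. closed_subgroup_TT r H \<and> (q, u) \<in> complexify r H}"

definition tspace :: "nat \<Rightarrow> 'a topology \<Rightarrow> ((nat \<Rightarrow> complex) \<Rightarrow> 'a \<Rightarrow> 'a) \<Rightarrow> bool" where
  "tspace r X act \<longleftrightarrow>
     continuous_map (prod_topology (top_of_set (torus r)) X) X (\<lambda>(t, x). act t x) \<and>
     (\<forall>x\<in>topspace X. act tone x = x) \<and>
     (\<forall>s\<in>torus r. \<forall>t\<in>torus r. \<forall>x\<in>topspace X. act (tmul s t) x = act s (act t x))"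

definition disk :: "nat \<Rightarrow> (nat \<Rightarrow> real) set" where
  "disk n = {v. (\<forall>i\<ge>n. v i = 0) \<and> (\<Sum>i<n. (v i)\<^sup>2) \<le> 1}"

definition disk_bdry :: "nat \<Rightarrow> (nat \<Rightarrow> real) set" where
  "disk_bdry n = {v \<in> disk n. (\<Sum>i<n. (v i)\<^sup>2) = 1}"

(* Finite T-CW complex: finitely many skeleta sk 0 \<subseteq> ... \<subseteq> sk N = X, where sk k arises from
   sk (k-1) (sk (-1) = {}) by attaching finitely many equivariant cells T/H \<times> D^k, H closed.
   The cell T/H \<times> D^k is encoded by a characteristic map \<Phi> : T \<times> D^k \<rightarrow> sk k which is
   T-equivariant and H-invariant in the T-variable (i.e. factors through T/H \<times> D^k),
   maps T \<times> S^{k-1} into sk (k-1), is injective on T/H \<times> int D^k, the open cells partition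
   sk k - sk (k-1), and sk k carries the quotient (weak) topology. *)
definition finite_TCW :: "nat \<Rightarrow> 'a topology \<Rightarrow> ((nat \<Rightarrow> complex) \<Rightarrow> 'a \<Rightarrow> 'a) \<Rightarrow> bool" where
  "finite_TCW r X act \<longleftrightarrow> tspace r X act \<and>
    (\<exists>(N::nat) (sk :: nat \<Rightarrow> 'a set) (J :: nat \<Rightarrow> nat set)
        (H :: nat \<Rightarrow> nat \<Rightarrow> (nat \<Rightarrow> complex) set)
        (\<Phi> :: nat \<Rightarrow> nat \<Rightarrow> (nat \<Rightarrow> complex) \<times> (nat \<Rightarrow> real) \<Rightarrow> 'a).
      sk N = topspace X \<and>
      (\<forall>k\<le>N. let P = (if k = 0 then {} else sk (k - 1)) in
         finite (J k) \<and> P \<subseteq> sk k \<and> sk k \<subseteq> topspace X \<and>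
         (\<forall>j\<in>J k.
            closed_subgroup_T r (H k j) \<and>
            continuous_map (prod_topology (top_of_set (torus r)) (top_of_set (disk k)))
                           (subtopology X (sk k)) (\<Phi> k j) \<and>
            (\<forall>s\<in>torus r. \<forall>t\<in>torus r. \<forall>d\<in>disk k.
                \<Phi> k j (tmul s t, d) = act s (\<Phi> k j (t, d))) \<and>
            (\<forall>t\<in>torus r. \<forall>h\<in>H k j. \<forall>d\<in>disk k. \<Phi> k j (tmul t h, d) = \<Phi> k j (t, d)) \<and>
            (\<forall>t\<in>torus r. \<forall>d\<in>disk_bdry k. \<Phi> k j (t, d) \<in> P) \<and>
            (\<forall>t\<in>torus r. \<forall>t'\<in>torus r. \<forall>d\<in>disk k - disk_bdry k. \<forall>d'\<in>disk k - disk_bdry k.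
                \<Phi> k j (t, d) = \<Phi> k j (t', d') \<longrightarrow> d = d' \<and> tmul (tinv t') t \<in> H k j)) \<and>
         (\<forall>j\<in>J k. \<forall>j'\<in>J k. j \<noteq> j' \<longrightarrow>
            \<Phi> k j ` (torus r \<times> (disk k - disk_bdry k)) \<inter>
            \<Phi> k j' ` (torus r \<times> (disk k - disk_bdry k)) = {}) \<and>
         sk k - P = (\<Union>j\<in>J k. \<Phi> k j ` (torus r \<times> (disk k - disk_bdry k))) \<and>
         (\<Union>j\<in>J k. \<Phi> k j ` (torus r \<times> (disk k - disk_bdry k))) \<inter> P = {} \<and>
         (\<forall>U. openin (subtopology X (sk k)) U \<longleftrightarrow>
              U \<subseteq> sk k \<and> openin (subtopology X P) (U \<inter> P) \<and>
              (\<forall>j\<in>J k. openin (prod_topology (top_of_set (torus r)) (top_of_set (disk k)))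
                              {p \<in> torus r \<times> disk k. \<Phi> k j p \<in> U}))))"

(* free loop spaces: continuous maps \<T> \<rightarrow> Z (extended by undefined off the circle) *)
definition loop_of :: "(complex \<Rightarrow> 'b) \<Rightarrow> complex \<Rightarrow> 'b" where
  "loop_of f = (\<lambda>s. if s \<in> circle then f s else undefined)"

definition loops :: "'b topology \<Rightarrow> (complex \<Rightarrow> 'b) set" where
  "loops Z = {\<gamma>. continuous_map (top_of_set circle) Z \<gamma> \<and> \<gamma> = loop_of \<gamma>}"

definition loop_act :: "((nat \<Rightarrow> complex) \<Rightarrow> 'b \<Rightarrow> 'b) \<Rightarrow> complex \<times> (nat \<Rightarrow> complex)
                         \<Rightarrow> (complex \<Rightarrow> 'b) \<Rightarrow> complex \<Rightarrow> 'b" where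
  "loop_act act p \<gamma> = loop_of (\<lambda>s. act (snd p) (\<gamma> (inverse (fst p) * s)))"

definition fixed_loops :: "nat \<Rightarrow> 'b topology \<Rightarrow> ((nat \<Rightarrow> complex) \<Rightarrow> 'b \<Rightarrow> 'b)
                            \<Rightarrow> complex \<Rightarrow> (nat \<Rightarrow> complex) \<Rightarrow> (complex \<Rightarrow> 'b) set" where
  "fixed_loops r Z act q u = {\<gamma> \<in> loops Z. \<forall>p\<in>Tqu r q u. loop_act act p \<gamma> = \<gamma>}"

(* X_+ = X \<squnion> {pt}: Some x for x \<in> X, None the disjoint basepoint *)
definition plus_top :: "'a topology \<Rightarrow> 'a option topology" where
  "plus_top X = topology (\<lambda>U. U \<subseteq> insert None (Some ` topspace X) \<and> openin X {x. Some x \<in> U})"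

(* smash product of pointed spaces (A,a0), (B,b0): A \<times> B / (A \<or> B), basepoint None *)
definition smash_carrier :: "'s set \<Rightarrow> 's \<Rightarrow> 'b set \<Rightarrow> 'b \<Rightarrow> ('s \<times> 'b) option set" where
  "smash_carrier A a0 B b0 = insert None (Some ` ((A - {a0}) \<times> (B - {b0})))"

definition smash_proj :: "'s \<Rightarrow> 'b \<Rightarrow> 's \<times> 'b \<Rightarrow> ('s \<times> 'b) option" where
  "smash_proj a0 b0 p = (if fst p = a0 \<or> snd p = b0 then None else Some p)"

definition smash_top :: "'s topology \<Rightarrow> 's \<Rightarrow> 'b topology \<Rightarrow> 'b \<Rightarrow> ('s \<times> 'b) option topology" where
  "smash_top A a0 B b0 = topology (\<lambda>U. U \<subseteq> smash_carrier (topspace A) a0 (topspace B) b0 \<and>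
      openin (prod_topology A B) {p \<in> topspace (prod_topology A B). smash_proj a0 b0 p \<in> U})"

definition smash_plus_act :: "((nat \<Rightarrow> complex) \<Rightarrow> 'a \<Rightarrow> 'a) \<Rightarrow> (nat \<Rightarrow> complex)
        \<Rightarrow> (complex \<times> 'a option) option \<Rightarrow> (complex \<times> 'a option) option" where
  "smash_plus_act act t = map_option (\<lambda>(z, y). (z, map_option (act t) y))"

(* S^1 \<and> (LX^{q,u})_+ \<rightarrow> L(S^1 \<and> X_+), [z,\<gamma>] \<mapsto> (s \<mapsto> [z,\<gamma>(s)]), basepoint \<mapsto> constant loop *)
definition smash_loop_incl :: "(complex \<times> (complex \<Rightarrow> 'a) option) option
        \<Rightarrow> complex \<Rightarrow> (complex \<times> 'a option) option" where
  "smash_loop_incl p = (case p of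
      None \<Rightarrow> loop_of (\<lambda>s. None)
    | Some (z, None) \<Rightarrow> loop_of (\<lambda>s. None)
    | Some (z, Some \<gamma>) \<Rightarrow> loop_of (\<lambda>s. Some (z, Some (\<gamma> s))))"

end

theory Submission
  imports Defs
begin

(* Since 0 < |q| < 1, the group T(q,u) contains the one-parameter subgroup
   t \<mapsto> (e^(i t log|q|), (e^(i t log|u_i|))_i). Indeed, a closed subgroup H of \<T> \<times> T is cut
   out by the characters trivial on it (approximate the distance to H uniformly by trigonometric
   polynomials via Stone-Weierstrass, then average over powers of elements of H to kill the
   characters that are nontrivial on H), and if (q,u) \<in> H_\<complex> such a character is 1 at (q,u), so
   its weight is orthogonal to (log|q|, (log|u_i|)_i) and it is trivial on the subgroup.
   The first coordinate of this subgroup runs through all of \<T>, so a loop fixed by T(q,u) takes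
   all its values in the T-orbit of its value at 1. As T acts trivially on the S^1-coordinate of
   S^1 \<and> X_+, such a loop is either the constant loop at the basepoint or s \<mapsto> [z, \<delta>(s)] for
   one z \<noteq> 1 and a loop \<delta> in X, which is then itself fixed by T(q,u). *)

section \<open>The group \<open>\<T> \<times> T\<close>\<close>

definition circle_torus :: "nat \<Rightarrow> (complex \<times> (nat \<Rightarrow> complex)) set" where
  "circle_torus r = circle \<times> torus r"

definition ct_mul :: "complex \<times> (nat \<Rightarrow> complex) \<Rightarrow> complex \<times> (nat \<Rightarrow> complex) \<Rightarrow> complex \<times> (nat \<Rightarrow> complex)" where
  "ct_mul p p' = (fst p * fst p', tmul (snd p) (snd p'))"

definition ct_inv :: "complex \<times> (nat \<Rightarrow> complex) \<Rightarrow> complex \<times> (nat \<Rightarrow> complex)" where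
  "ct_inv p = (inverse (fst p), tinv (snd p))"

definition ct_pow :: "complex \<times> (nat \<Rightarrow> complex) \<Rightarrow> nat \<Rightarrow> complex \<times> (nat \<Rightarrow> complex)" where
  "ct_pow h j = (fst h ^ j, \<lambda>i. snd h i ^ j)"

lemma mem_circle_torus_iff:
  "p \<in> circle_torus r \<longleftrightarrow> cmod (fst p) = 1 \<and> (\<forall>i<r. cmod (snd p i) = 1) \<and> (\<forall>i\<ge>r. snd p i = 1)"
  by (cases p) (auto simp: circle_torus_def circle_def torus_def)

lemma circle_torus_norm_snd: "p \<in> circle_torus r \<Longrightarrow> cmod (snd p i) = 1"
  by (cases "i < r") (auto simp: mem_circle_torus_iff)

lemma circle_torus_fst_nonzero: "p \<in> circle_torus r \<Longrightarrow> fst p \<noteq> 0"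
  by (auto simp: mem_circle_torus_iff)

lemma circle_torus_snd_nonzero: "p \<in> circle_torus r \<Longrightarrow> snd p i \<noteq> 0"
  by (metis circle_torus_norm_snd norm_zero zero_neq_one)

lemma one_in_circle_torus: "(1, tone) \<in> circle_torus r"
  by (auto simp: mem_circle_torus_iff tone_def)

lemma ct_mul_in_circle_torus: "p \<in> circle_torus r \<Longrightarrow> p' \<in> circle_torus r \<Longrightarrow> ct_mul p p' \<in> circle_torus r"
  by (auto simp: mem_circle_torus_iff ct_mul_def tmul_def norm_mult)

lemma ct_mul_inv_cancel: "g \<in> circle_torus r \<Longrightarrow> ct_mul (ct_mul y (ct_inv g)) g = y"
  using circle_torus_fst_nonzero circle_torus_snd_nonzero
  by (simp add: ct_mul_def ct_inv_def tmul_def tinv_def prod_eq_iff fun_eq_iff)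

lemma torus_eq_PiE: "torus r = PiE UNIV (\<lambda>i. if i < r then sphere 0 1 else {1})"
  by (auto simp: torus_def PiE_UNIV_domain split: if_splits)

lemma compact_circle_torus: "compact (circle_torus r)"
proof -
  have "compactin (product_topology (\<lambda>i. euclidean) UNIV)
          (PiE UNIV (\<lambda>i. if i < r then sphere (0::complex) 1 else {1}))"
    by (subst compactin_PiE) (auto simp: compactin_euclidean_iff)
  then have "compact (torus r)"
    by (simp add: torus_eq_PiE euclidean_product_topology compactin_euclidean_iff)
  then show ?thesis unfolding circle_torus_def circle_def by (intro compact_Times compact_sphere)
qed

lemma closed_subgroup_circle_torus: "closed_subgroup_TT r (circle_torus r)"
  using one_in_circle_torus compact_imp_closed[OF compact_circle_torus]
  by (auto simp: closed_subgroup_TT_def circle_torus_def circle_def torus_def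
      tmul_def tinv_def norm_mult norm_divide norm_inverse)

text \<open>Right translation is an isometry for the metric of \<^theory>\<open>HOL-Analysis.Function_Metric\<close>
  because every coordinate of \<open>g\<close>, including the frozen ones \<open>i \<ge> r\<close>, has modulus \<open>1\<close>.\<close>

lemma dist_ct_mul_right:
  assumes "g \<in> circle_torus r"
  shows "dist (ct_mul y g) (ct_mul h g) = dist y h"
proof -
  have "dist (fst y * fst g) (fst h * fst g) = dist (fst y) (fst h)"
    using assms by (simp add: dist_norm left_diff_distrib[symmetric] norm_mult mem_circle_torus_iff)
  moreover have "dist (tmul (snd y) (snd g)) (tmul (snd h) (snd g)) = dist (snd y) (snd h)"
    using circle_torus_norm_snd[OF assms]
    by (simp add: dist_fun_def tmul_def dist_norm left_diff_distrib[symmetric] norm_mult)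
  ultimately show ?thesis by (simp add: ct_mul_def dist_prod_def)
qed

lemma closed_subgroup_TT_subset: "closed_subgroup_TT r H \<Longrightarrow> H \<subseteq> circle_torus r"
  by (simp add: closed_subgroup_TT_def circle_torus_def)

lemma closed_subgroup_TT_one: "closed_subgroup_TT r H \<Longrightarrow> (1, tone) \<in> H"
  by (simp add: closed_subgroup_TT_def)

lemma closed_subgroup_TT_mul_inv:
  assumes "closed_subgroup_TT r H" "p \<in> H" "p' \<in> H"
  shows "ct_mul p (ct_inv p') \<in> H"
proof -
  have "(fst p / fst p', tmul (snd p) (tinv (snd p'))) \<in> H"
    using assms unfolding closed_subgroup_TT_def by blast
  then show ?thesis by (simp add: ct_mul_def ct_inv_def divide_inverse)
qed

lemma closed_subgroup_TT_inv: "closed_subgroup_TT r H \<Longrightarrow> g \<in> H \<Longrightarrow> ct_inv g \<in> H"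
  using closed_subgroup_TT_mul_inv[of r H "(1, tone)" g] closed_subgroup_TT_one
  by (simp add: ct_mul_def ct_inv_def tmul_def tone_def tinv_def)

lemma closed_subgroup_TT_mul:
  assumes "closed_subgroup_TT r H" "g \<in> H" "h \<in> H"
  shows "ct_mul h g \<in> H"
proof -
  have "ct_mul h (ct_inv (ct_inv g)) \<in> H"
    using assms closed_subgroup_TT_mul_inv closed_subgroup_TT_inv by blast
  then show ?thesis by (simp add: ct_inv_def tinv_def)
qed

lemma closed_subgroup_TT_pow: "closed_subgroup_TT r H \<Longrightarrow> h \<in> H \<Longrightarrow> ct_pow h j \<in> H"
proof (induction j)
  case 0
  then show ?case using closed_subgroup_TT_one by (simp add: ct_pow_def tone_def)
next
  case (Suc j)
  then have "ct_mul h (ct_pow h j) \<in> H" using closed_subgroup_TT_mul by blast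
  then show ?case by (simp add: ct_pow_def ct_mul_def tmul_def)
qed

lemma infdist_ct_mul_right:
  assumes H: "closed_subgroup_TT r H" and g: "g \<in> H"
  shows "infdist (ct_mul y g) H = infdist y H"
proof -
  have gG: "g \<in> circle_torus r" using closed_subgroup_TT_subset[OF H] g by blast
  have "(\<lambda>h. ct_mul h g) ` H = H"
  proof
    show "(\<lambda>h. ct_mul h g) ` H \<subseteq> H" using closed_subgroup_TT_mul[OF H g] by blast
    show "H \<subseteq> (\<lambda>h. ct_mul h g) ` H"
    proof
      fix h assume "h \<in> H"
      then have "ct_mul h (ct_inv g) \<in> H" by (rule closed_subgroup_TT_mul_inv[OF H _ g])
      then show "h \<in> (\<lambda>h. ct_mul h g) ` H" using ct_mul_inv_cancel[OF gG, of h] by (metis image_eqI)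
    qed
  qed
  then have "infdist (ct_mul y g) H = infdist (ct_mul y g) ((\<lambda>h. ct_mul h g) ` H)" by simp
  also have "\<dots> = infdist y H"
    by (simp add: infdist_def image_image dist_ct_mul_right[OF gG])
  finally show ?thesis .
qed

section \<open>Characters and trigonometric polynomials\<close>

type_synonym weight = "int \<times> (nat \<Rightarrow> int)"

definition character :: "nat \<Rightarrow> weight \<Rightarrow> complex \<times> (nat \<Rightarrow> complex) \<Rightarrow> complex" where
  "character r l = chi r (fst l) (snd l)"

definition weight_add :: "weight \<Rightarrow> weight \<Rightarrow> weight" where
  "weight_add l l' = (fst l + fst l', \<lambda>i. snd l i + snd l' i)"

definition weight_neg :: "weight \<Rightarrow> weight" where
  "weight_neg l = (- fst l, \<lambda>i. - snd l i)"

lemma character_zero [simp]: "character r (0, \<lambda>i. 0) p = 1"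
  by (simp add: character_def chi_def)

lemma character_one [simp]: "character r l (1, tone) = 1"
  by (simp add: character_def chi_def tone_def)

lemma character_ct_mul: "character r l (ct_mul p p') = character r l p * character r l p'"
  by (simp add: character_def chi_def ct_mul_def tmul_def power_int_mult_distrib prod.distrib
      algebra_simps)

lemma character_ct_pow: "character r l (ct_pow h j) = character r l h ^ j"
proof (induction j)
  case (Suc j)
  have "ct_pow h (Suc j) = ct_mul h (ct_pow h j)" by (simp add: ct_pow_def ct_mul_def tmul_def)
  then show ?case using Suc by (simp add: character_ct_mul)
qed (simp add: ct_pow_def flip: tone_def)

lemma character_weight_add:
  assumes "p \<in> circle_torus r"
  shows "character r (weight_add l l') p = character r l p * character r l' p"
  using circle_torus_fst_nonzero[OF assms] circle_torus_snd_nonzero[OF assms]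
  by (simp add: character_def chi_def weight_add_def power_int_add prod.distrib algebra_simps)

lemma norm_character:
  assumes "p \<in> circle_torus r"
  shows "cmod (character r l p) = 1"
  using assms by (simp add: character_def chi_def norm_mult norm_power_int prod_norm[symmetric]
      circle_torus_norm_snd mem_circle_torus_iff)

lemma cnj_character:
  assumes p: "p \<in> circle_torus r"
  shows "cnj (character r l p) = character r (weight_neg l) p"
proof -
  have "weight_add l (weight_neg l) = (0, \<lambda>i. 0)" by (simp add: weight_add_def weight_neg_def)
  then have "character r l p * character r (weight_neg l) p = 1"
    using character_weight_add[OF p, of l "weight_neg l"] by simp
  moreover have "character r l p * cnj (character r l p) = 1"
    using norm_character[OF p, of l] by (metis complex_norm_square mult.commute of_real_1 power_one)
  ultimately show ?thesis by (metis mult_cancel_left mult_zero_left zero_neq_one)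
qed

lemma continuous_on_character: "continuous_on (circle_torus r) (character r l)"
proof -
  have coord: "continuous_on S (\<lambda>x::complex \<times> (nat \<Rightarrow> complex). snd x i)" for S i
    by (rule continuous_on_product_then_coordinatewise[OF continuous_on_snd[OF continuous_on_id]])
  show ?thesis
    unfolding character_def chi_def
    by (intro continuous_intros coord)
       (auto dest: circle_torus_fst_nonzero circle_torus_snd_nonzero)
qed

definition trig_poly :: "nat \<Rightarrow> weight set \<Rightarrow> (weight \<Rightarrow> complex) \<Rightarrow> complex \<times> (nat \<Rightarrow> complex) \<Rightarrow> complex" where
  "trig_poly r F c p = (\<Sum>l\<in>F. c l * character r l p)"

definition is_trig_poly :: "nat \<Rightarrow> (complex \<times> (nat \<Rightarrow> complex) \<Rightarrow> complex) \<Rightarrow> bool" where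
  "is_trig_poly r P \<longleftrightarrow> (\<exists>F c. finite F \<and> (\<forall>p\<in>circle_torus r. P p = trig_poly r F c p))"

lemma continuous_on_trig_poly: "continuous_on (circle_torus r) (trig_poly r F c)"
  unfolding trig_poly_def by (intro continuous_intros continuous_on_character)

lemma continuous_on_is_trig_poly: "is_trig_poly r P \<Longrightarrow> continuous_on (circle_torus r) P"
  unfolding is_trig_poly_def using continuous_on_trig_poly continuous_on_cong by force

lemma is_trig_polyI:
  assumes "finite I" "\<And>p. p \<in> circle_torus r \<Longrightarrow> P p = (\<Sum>i\<in>I. a i * character r (e i) p)"
  shows "is_trig_poly r P"
proof -
  have "(\<Sum>i\<in>I. a i * character r (e i) p) = trig_poly r (e ` I) (\<lambda>l. \<Sum>i\<in>{i\<in>I. e i = l}. a i) p" for p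
  proof -
    have "(\<Sum>i\<in>I. a i * character r (e i) p)
        = (\<Sum>l\<in>e ` I. \<Sum>i\<in>{i\<in>I. e i = l}. a i * character r (e i) p)"
      by (rule sum.image_gen[OF assms(1)])
    then show ?thesis by (simp add: trig_poly_def sum_distrib_right)
  qed
  then show ?thesis
    unfolding is_trig_poly_def using assms
    by (intro exI[of _ "e ` I"] exI[of _ "\<lambda>l. \<Sum>i\<in>{i\<in>I. e i = l}. a i"]) auto
qed

lemma is_trig_poly_const: "is_trig_poly r (\<lambda>p. a)"
  by (rule is_trig_polyI[of "{()}" _ _ "\<lambda>_. a" "\<lambda>_. (0, \<lambda>i. 0)"]) auto

lemma is_trig_poly_character: "is_trig_poly r (\<lambda>p. a * character r l p)"
  by (rule is_trig_polyI[of "{()}" _ _ "\<lambda>_. a" "\<lambda>_. l"]) auto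

lemma is_trig_poly_add:
  assumes "is_trig_poly r P" "is_trig_poly r Q"
  shows "is_trig_poly r (\<lambda>p. P p + Q p)"
proof -
  obtain F c where F: "finite F" "\<forall>p\<in>circle_torus r. P p = trig_poly r F c p"
    using assms(1) is_trig_poly_def by auto
  obtain F' c' where F': "finite F'" "\<forall>p\<in>circle_torus r. Q p = trig_poly r F' c' p"
    using assms(2) is_trig_poly_def by auto
  show ?thesis
    by (rule is_trig_polyI[of "F <+> F'" _ _ "case_sum c c'" "case_sum id id"])
       (use F F' in \<open>auto simp: trig_poly_def sum.Plus comp_def\<close>)
qed

lemma is_trig_poly_mult:
  assumes "is_trig_poly r P" "is_trig_poly r Q"
  shows "is_trig_poly r (\<lambda>p. P p * Q p)"
proof -
  obtain F c where F: "finite F" "\<forall>p\<in>circle_torus r. P p = trig_poly r F c p"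
    using assms(1) is_trig_poly_def by auto
  obtain F' c' where F': "finite F'" "\<forall>p\<in>circle_torus r. Q p = trig_poly r F' c' p"
    using assms(2) is_trig_poly_def by auto
  show ?thesis
  proof (rule is_trig_polyI[of "F \<times> F'" _ _ "\<lambda>(l, l'). c l * c' l'" "\<lambda>(l, l'). weight_add l l'"])
    fix p assume p: "p \<in> circle_torus r"
    have "P p * Q p = (\<Sum>l\<in>F. \<Sum>l'\<in>F'. (c l * character r l p) * (c' l' * character r l' p))"
      using F F' p by (simp add: trig_poly_def sum_product)
    also have "\<dots> = (\<Sum>(l, l')\<in>F \<times> F'. (c l * c' l') * character r (weight_add l l') p)"
      by (simp add: sum.cartesian_product character_weight_add[OF p] algebra_simps)
    finally show "P p * Q p = (\<Sum>i\<in>F \<times> F'. (case i of (l, l') \<Rightarrow> c l * c' l') *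
        character r (case i of (l, l') \<Rightarrow> weight_add l l') p)"
      by (simp add: case_prod_unfold)
  qed (use F F' in auto)
qed

lemma is_trig_poly_cnj:
  assumes "is_trig_poly r P"
  shows "is_trig_poly r (\<lambda>p. cnj (P p))"
proof -
  obtain F c where F: "finite F" "\<forall>p\<in>circle_torus r. P p = trig_poly r F c p"
    using assms is_trig_poly_def by auto
  show ?thesis
    by (rule is_trig_polyI[of F _ _ "\<lambda>l. cnj (c l)" weight_neg])
       (use F in \<open>auto simp: trig_poly_def cnj_character\<close>)
qed

lemma character_separates_points:
  assumes "x \<in> circle_torus r" "y \<in> circle_torus r" "x \<noteq> y"
  obtains l where "character r l x \<noteq> character r l y"
proof (cases "fst x = fst y")
  case False
  then show ?thesis using that[of "(1, \<lambda>j. 0)"] by (simp add: character_def chi_def)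
next
  case True
  then obtain i where i: "snd x i \<noteq> snd y i" using assms(3) by (metis ext prod.expand)
  then have "i < r" using assms(1,2) by (metis mem_circle_torus_iff not_le)
  then have "character r (0, \<lambda>j. if j = i then 1 else 0) p = snd p i" for p
    by (simp add: character_def chi_def if_distrib[of "power_int _"] prod.delta cong: if_cong)
  then show ?thesis using that i by metis
qed

lemma complex_neq_Re_mult: "z \<noteq> w \<Longrightarrow> \<exists>a\<in>{1, -\<i>}. Re (a * z) \<noteq> Re (a * w)"
  using complex_eqI by force

text \<open>Closure of the real parts under products uses \<open>Re P * Re Q = Re (P * (Q + cnj Q) / 2)\<close>.\<close>

lemma trig_poly_dense:
  assumes "continuous_on (circle_torus r) f" "e > 0"
  obtains F c where "finite F" "\<forall>p\<in>circle_torus r. \<bar>f p - Re (trig_poly r F c p)\<bar> < e"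
proof -
  let ?R = "\<lambda>g. \<exists>P. is_trig_poly r P \<and> (\<forall>p\<in>circle_torus r. g p = Re (P p))"
  have "\<exists>g. ?R g \<and> (\<forall>x\<in>circle_torus r. \<bar>f x - g x\<bar> < e)"
  proof (rule Stone_Weierstrass_HOL[where P = ?R])
    show "compact (circle_torus r)" by (rule compact_circle_torus)
    show "?R (\<lambda>x. a)" for a
      by (rule exI[of _ "\<lambda>p. complex_of_real a"]) (simp add: is_trig_poly_const)
    show "continuous_on (circle_torus r) g" if "?R g" for g
      using that continuous_on_Re[OF continuous_on_is_trig_poly] continuous_on_cong by force
    show "?R (\<lambda>x. g x + h x)" if "?R g \<and> ?R h" for g h
      using that is_trig_poly_add by fastforce
    show "?R (\<lambda>x. g x * h x)" if gh: "?R g \<and> ?R h" for g h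
    proof -
      obtain P Q where PQ: "is_trig_poly r P" "is_trig_poly r Q"
        "\<forall>p\<in>circle_torus r. g p = Re (P p)" "\<forall>p\<in>circle_torus r. h p = Re (Q p)"
        using gh by blast
      have "is_trig_poly r (\<lambda>p. P p * ((Q p + cnj (Q p)) * (1/2)))"
        by (intro is_trig_poly_mult is_trig_poly_add is_trig_poly_cnj is_trig_poly_const PQ)
      moreover have "\<forall>p\<in>circle_torus r. g p * h p = Re (P p * ((Q p + cnj (Q p)) * (1/2)))"
        using PQ(3,4) by (simp add: algebra_simps add_divide_distrib[symmetric])
      ultimately show ?thesis by blast
    qed
    show "\<exists>g. ?R g \<and> g x \<noteq> g y" if xy: "x \<in> circle_torus r \<and> y \<in> circle_torus r \<and> x \<noteq> y" for x y
    proof -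
      obtain l where l: "character r l x \<noteq> character r l y"
        using xy character_separates_points by blast
      then obtain a where "Re (a * character r l x) \<noteq> Re (a * character r l y)"
        using complex_neq_Re_mult by blast
      moreover have "?R (\<lambda>p. Re (a * character r l p))"
        by (rule exI[of _ "\<lambda>p. a * character r l p"]) (simp add: is_trig_poly_character)
      ultimately show ?thesis by (intro exI[of _ "\<lambda>p. Re (a * character r l p)"] conjI)
    qed
  qed (use assms in auto)
  then obtain g P F c where "\<forall>x\<in>circle_torus r. \<bar>f x - g x\<bar> < e"
    "\<forall>p\<in>circle_torus r. g p = Re (P p)" "finite F" "\<forall>p\<in>circle_torus r. P p = trig_poly r F c p"
    unfolding is_trig_poly_def by blast
  then show ?thesis using that[of F c] by simp
qed

section \<open>Duality for closed subgroups of \<open>\<T> \<times> T\<close>\<close>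

lemma norm_geometric_sum_le:
  assumes "cmod z = 1" "z \<noteq> 1"
  shows "cmod (\<Sum>j<M. z ^ j) \<le> 2 / cmod (1 - z)"
proof -
  have "cmod (1 - z ^ M) \<le> 2"
    using norm_triangle_ineq4[of 1 "z ^ M"] assms(1) by (simp add: norm_power)
  then show ?thesis using assms(2) by (simp add: sum_gp_strict norm_divide divide_right_mono)
qed

lemma averaged_trig_poly_approx:
  assumes H: "closed_subgroup_TT r H" and h: "h \<in> H" and M: "M > 0"
    and inv: "\<forall>y\<in>circle_torus r. \<forall>g\<in>H. f (ct_mul y g) = f y"
    and approx: "\<forall>y\<in>circle_torus r. \<bar>f y - Re (trig_poly r F c y)\<bar> \<le> e"
  shows "\<forall>y\<in>circle_torus r. \<bar>f y - Re (trig_poly r F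
           (\<lambda>l. c l * (\<Sum>j<M. character r l h ^ j) / of_nat M) y)\<bar> \<le> e"
proof
  fix y assume y: "y \<in> circle_torus r"
  define y' where "y' j = ct_mul y (ct_pow h j)" for j
  have y'G: "y' j \<in> circle_torus r" for j
    using ct_mul_in_circle_torus[OF y] closed_subgroup_TT_pow[OF H h] closed_subgroup_TT_subset[OF H]
    unfolding y'_def by blast
  have f_y': "f (y' j) = f y" for j
    using inv y closed_subgroup_TT_pow[OF H h] by (simp add: y'_def)
  have "trig_poly r F (\<lambda>l. c l * (\<Sum>j<M. character r l h ^ j) / of_nat M) y
      = (\<Sum>j<M. trig_poly r F c (y' j)) / of_nat M"
    by (simp add: trig_poly_def y'_def character_ct_mul character_ct_pow sum_distrib_left
        sum_divide_distrib mult_ac flip: sum.swap[of _ F])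
  then have "Re (trig_poly r F (\<lambda>l. c l * (\<Sum>j<M. character r l h ^ j) / of_nat M) y)
      = (\<Sum>j<M. Re (trig_poly r F c (y' j))) / M"
    by (simp add: Re_sum Re_divide_of_nat)
  then have avg: "f y - Re (trig_poly r F (\<lambda>l. c l * (\<Sum>j<M. character r l h ^ j) / of_nat M) y)
      = (\<Sum>j<M. f (y' j) - Re (trig_poly r F c (y' j))) / M"
    using M by (simp add: f_y' sum_subtractf field_simps)
  have "\<bar>\<Sum>j<M. f (y' j) - Re (trig_poly r F c (y' j))\<bar>
      \<le> (\<Sum>j<M. \<bar>f (y' j) - Re (trig_poly r F c (y' j))\<bar>)"
    by (rule sum_abs)
  also have "\<dots> \<le> M * e"
    using sum_mono[of "{..<M}" _ "\<lambda>_. e"] approx y'G by simp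
  finally show "\<bar>f y - Re (trig_poly r F (\<lambda>l. c l * (\<Sum>j<M. character r l h ^ j) / of_nat M) y)\<bar> \<le> e"
    using M by (simp add: avg divide_le_eq mult.commute)
qed

text \<open>For \<open>z = character r l0 h \<noteq> 1\<close> the mean of \<open>z\<^sup>j\<close> over \<open>j < M\<close> is at most
  \<open>2 / (M |1 - z|)\<close>, so averaging over enough powers of \<open>h\<close> makes the \<open>l0\<close>-term negligible.\<close>

lemma remove_nontrivial_weight:
  assumes H: "closed_subgroup_TT r H" and h: "h \<in> H"
    and inv: "\<forall>y\<in>circle_torus r. \<forall>g\<in>H. f (ct_mul y g) = f y"
    and F: "finite F" and l0: "l0 \<in> F" and nontrivial: "character r l0 h \<noteq> 1"
    and approx: "\<forall>y\<in>circle_torus r. \<bar>f y - Re (trig_poly r F c y)\<bar> \<le> e"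
    and \<delta>: "\<delta> > 0"
  obtains c' where "\<forall>y\<in>circle_torus r. \<bar>f y - Re (trig_poly r (F - {l0}) c' y)\<bar> \<le> e + \<delta>"
proof -
  define z where "z = character r l0 h"
  have "h \<in> circle_torus r" using closed_subgroup_TT_subset[OF H] h by blast
  then have z: "cmod z = 1" "z \<noteq> 1" using norm_character nontrivial by (auto simp: z_def)
  then have z_dist: "cmod (1 - z) > 0" by simp
  obtain M :: nat where M: "real M > 2 * cmod (c l0) / (cmod (1 - z) * \<delta>)"
    using reals_Archimedean2 by blast
  moreover have "2 * cmod (c l0) / (cmod (1 - z) * \<delta>) \<ge> 0" using z_dist \<delta> by simp
  ultimately have M0: "M > 0" by linarith
  define c' where "c' l = c l * (\<Sum>j<M. character r l h ^ j) / of_nat M" for l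
  have approx': "\<forall>y\<in>circle_torus r. \<bar>f y - Re (trig_poly r F c' y)\<bar> \<le> e"
    unfolding c'_def by (rule averaged_trig_poly_approx[OF H h M0 inv approx])
  have "cmod (c' l0) = cmod (c l0) * cmod (\<Sum>j<M. z ^ j) / M"
    by (simp add: c'_def z_def norm_mult norm_divide)
  also have "\<dots> \<le> cmod (c l0) * (2 / cmod (1 - z)) / M"
    by (intro divide_right_mono mult_left_mono norm_geometric_sum_le z) auto
  also have "\<dots> \<le> \<delta>"
    using M M0 z_dist \<delta> by (simp add: field_simps)
  finally have small: "cmod (c' l0) \<le> \<delta>" .
  have "\<bar>f y - Re (trig_poly r (F - {l0}) c' y)\<bar> \<le> e + \<delta>" if y: "y \<in> circle_torus r" for y
  proof -
    have "trig_poly r F c' y = c' l0 * character r l0 y + trig_poly r (F - {l0}) c' y"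
      unfolding trig_poly_def using F l0 by (simp add: sum.remove)
    moreover have "\<bar>Re (c' l0 * character r l0 y)\<bar> \<le> \<delta>"
      using abs_Re_le_cmod[of "c' l0 * character r l0 y"] small norm_character[OF y]
      by (simp add: norm_mult)
    ultimately show ?thesis using approx' y by (fastforce simp: abs_le_iff)
  qed
  then show ?thesis using that by blast
qed

lemma invariant_approx_by_annihilator:
  assumes H: "closed_subgroup_TT r H"
    and inv: "\<forall>y\<in>circle_torus r. \<forall>g\<in>H. f (ct_mul y g) = f y"
  shows "finite F \<Longrightarrow> \<forall>y\<in>circle_torus r. \<bar>f y - Re (trig_poly r F c y)\<bar> \<le> e \<Longrightarrow> \<delta> > 0 \<Longrightarrow>
    \<exists>F' c'. finite F' \<and> (\<forall>l\<in>F'. \<forall>g\<in>H. character r l g = 1) \<and>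
      (\<forall>y\<in>circle_torus r. \<bar>f y - Re (trig_poly r F' c' y)\<bar> \<le> e + \<delta>)"
proof (induction F arbitrary: c e \<delta> rule: finite_psubset_induct)
  case (psubset F)
  show ?case
  proof (cases "\<forall>l\<in>F. \<forall>g\<in>H. character r l g = 1")
    case True
    then show ?thesis using psubset by (fastforce intro: order_trans)
  next
    case False
    then obtain l0 h where l0: "l0 \<in> F" "h \<in> H" "character r l0 h \<noteq> 1" by blast
    have \<delta>2: "\<delta> / 2 > 0" using psubset.prems(2) by simp
    obtain c' where
      "\<forall>y\<in>circle_torus r. \<bar>f y - Re (trig_poly r (F - {l0}) c' y)\<bar> \<le> e + \<delta> / 2"
      using remove_nontrivial_weight[OF H l0(2) inv psubset.hyps l0(1,3) psubset.prems(1) \<delta>2] .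
    moreover have "F - {l0} \<subset> F" using l0(1) by blast
    ultimately have "\<exists>F' c''. finite F' \<and> (\<forall>l\<in>F'. \<forall>g\<in>H. character r l g = 1) \<and>
        (\<forall>y\<in>circle_torus r. \<bar>f y - Re (trig_poly r F' c'' y)\<bar> \<le> (e + \<delta> / 2) + \<delta> / 2)"
      using psubset.IH \<delta>2 by presburger
    then show ?thesis by (simp add: add_ac)
  qed
qed

text \<open>The distance to \<open>H\<close> is right \<open>H\<close>-invariant, vanishes at \<open>1\<close> and not at \<open>x\<close>. If every
  character trivial on \<open>H\<close> were \<open>1\<close> at \<open>x\<close>, the approximations of this distance by combinations
  of such characters would take equal values at \<open>x\<close> and at \<open>1\<close>.\<close>

lemma closed_subgroup_separated_by_character:
  assumes H: "closed_subgroup_TT r H" and x: "x \<in> circle_torus r" "x \<notin> H"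
  shows "\<exists>l. (\<forall>g\<in>H. character r l g = 1) \<and> character r l x \<noteq> 1"
proof (rule ccontr)
  assume "\<nexists>l. (\<forall>g\<in>H. character r l g = 1) \<and> character r l x \<noteq> 1"
  then have trivial_at_x: "character r l x = 1" if "\<forall>g\<in>H. character r l g = 1" for l
    using that by blast
  define f where "f y = infdist y H" for y
  have "H \<noteq> {}" using closed_subgroup_TT_one[OF H] by blast
  then have fx: "f x > 0"
    unfolding f_def using H x(2) by (intro infdist_pos_not_in_closed) (simp_all add: closed_subgroup_TT_def)
  have f1: "f (1, tone) = 0" unfolding f_def using closed_subgroup_TT_one[OF H] by simp
  have inv: "\<forall>y\<in>circle_torus r. \<forall>g\<in>H. f (ct_mul y g) = f y"
    unfolding f_def using infdist_ct_mul_right[OF H] by blast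
  have "continuous_on (circle_torus r) f"
    unfolding f_def by (intro continuous_intros)
  moreover have "f x / 8 > 0" using fx by simp
  ultimately obtain F c where "finite F"
    "\<forall>p\<in>circle_torus r. \<bar>f p - Re (trig_poly r F c p)\<bar> < f x / 8"
    using trig_poly_dense by blast
  then obtain F' c' where F': "\<forall>l\<in>F'. \<forall>g\<in>H. character r l g = 1"
    "\<forall>y\<in>circle_torus r. \<bar>f y - Re (trig_poly r F' c' y)\<bar> \<le> f x / 8 + f x / 8"
    using invariant_approx_by_annihilator[OF H inv, of F c "f x / 8" "f x / 8"] fx
    by (fastforce intro: less_imp_le)
  have "trig_poly r F' c' x = trig_poly r F' c' (1, tone)"
    unfolding trig_poly_def using F'(1) trivial_at_x by simp
  moreover have "\<bar>f x - Re (trig_poly r F' c' x)\<bar> \<le> f x / 4"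
    using F'(2) x(1) by fastforce
  moreover have "\<bar>f (1, tone) - Re (trig_poly r F' c' (1, tone))\<bar> \<le> f x / 4"
    using F'(2) one_in_circle_torus by fastforce
  ultimately show False using f1 fx by (simp add: abs_le_iff)
qed

section \<open>The group \<open>T(q,u)\<close>\<close>

definition one_param :: "nat \<Rightarrow> real \<Rightarrow> (nat \<Rightarrow> real) \<Rightarrow> real \<Rightarrow> complex \<times> (nat \<Rightarrow> complex)" where
  "one_param r a b t = (exp (\<i> * of_real (t * a)), \<lambda>i. if i < r then exp (\<i> * of_real (t * b i)) else 1)"

lemma one_param_in_circle_torus: "one_param r a b t \<in> circle_torus r"
  by (simp add: mem_circle_torus_iff one_param_def norm_exp_i_times)

lemma character_one_param:
  "character r l (one_param r a b t)
     = exp (\<i> * of_real (t * (of_int (fst l) * a + (\<Sum>i<r. of_int (snd l i) * b i))))"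
proof -
  have "(\<Prod>i<r. (if i < r then exp (\<i> * of_real (t * b i)) else 1) powi snd l i)
      = (\<Prod>i<r. exp (\<i> * of_real (t * (of_int (snd l i) * b i))))"
    by (rule prod.cong) (auto simp: exp_power_int mult_ac)
  also have "\<dots> = exp (\<Sum>i<r. \<i> * of_real (t * (of_int (snd l i) * b i)))"
    by (simp add: exp_sum)
  finally have "(\<Prod>i<r. (if i < r then exp (\<i> * of_real (t * b i)) else 1) powi snd l i)
      = exp (\<Sum>i<r. \<i> * of_real (t * (of_int (snd l i) * b i)))" .
  then have "character r l (one_param r a b t)
      = exp (\<i> * of_real (t * a)) powi fst l * exp (\<Sum>i<r. \<i> * of_real (t * (of_int (snd l i) * b i)))"
    by (simp add: character_def chi_def one_param_def)
  also have "\<dots> = exp (of_int (fst l) * (\<i> * of_real (t * a))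
      + (\<Sum>i<r. \<i> * of_real (t * (of_int (snd l i) * b i))))"
    by (simp add: exp_power_int exp_add)
  finally show ?thesis by (simp add: algebra_simps sum_distrib_left)
qed

lemma exp_i_times_const_eq_1_imp_zero:
  assumes "\<forall>t. exp (\<i> * of_real (t * c)) = 1"
  shows "c = 0"
proof (rule ccontr)
  assume "c \<noteq> 0"
  then have "exp (\<i> * of_real (pi / c * c)) = -1" by simp
  then show False using assms by (metis one_neq_neg_one)
qed

lemma character_trivial_on_circle_torus:
  assumes "\<forall>p\<in>circle_torus r. character r l p = 1"
  shows "fst l = 0" "i < r \<Longrightarrow> snd l i = 0"
proof -
  have trivial: "of_int (fst l) * a + (\<Sum>i<r. of_int (snd l i) * b i) = 0" for a :: real and b
  proof (rule exp_i_times_const_eq_1_imp_zero, rule allI)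
    fix t
    show "exp (\<i> * of_real (t * (of_int (fst l) * a + (\<Sum>i<r. of_int (snd l i) * b i)))) = 1"
      using assms one_param_in_circle_torus[of r a b t] unfolding character_one_param[symmetric] by blast
  qed
  show "fst l = 0" using trivial[of 1 "\<lambda>_. 0"] by simp
  show "snd l i = 0" if "i < r"
    using trivial[of 0 "\<lambda>j. if j = i then 1 else 0"] that by (simp add: if_distrib cong: if_cong)
qed

lemma complexify_circle_torus:
  assumes "q \<noteq> 0" "u \<in> torusC r"
  shows "(q, u) \<in> complexify r (circle_torus r)"
proof -
  have "chi r m k (q, u) = 1" if "\<forall>p\<in>circle_torus r. chi r m k p = 1" for m k
    using character_trivial_on_circle_torus[of r "(m, k)"] that
    by (simp add: character_def chi_def)
  then show ?thesis using assms by (simp add: complexify_def)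
qed

lemma Tqu_subset_circle_torus: "q \<noteq> 0 \<Longrightarrow> u \<in> torusC r \<Longrightarrow> Tqu r q u \<subseteq> circle_torus r"
  unfolding Tqu_def using closed_subgroup_circle_torus complexify_circle_torus by blast

lemma log_norm_relation_if_chi_eq_1:
  assumes q: "q \<noteq> 0" and u: "u \<in> torusC r" and chi: "chi r m k (q, u) = 1"
  shows "of_int m * ln (cmod q) + (\<Sum>i<r. of_int (k i) * ln (cmod (u i))) = 0"
proof -
  have "u i \<noteq> 0" if "i < r" for i using u that by (simp add: torusC_def)
  then have "cmod (chi r m k (q, u)) = exp (of_int m * ln (cmod q) + (\<Sum>i<r. of_int (k i) * ln (cmod (u i))))"
    using q by (simp add: chi_def norm_mult norm_power_int prod_norm[symmetric] exp_add exp_sum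
        exp_power_int[symmetric] exp_ln)
  then show ?thesis using chi by simp
qed

text \<open>The characters trivial on \<open>H\<close> are \<open>1\<close> at \<open>(q, u)\<close>, hence have weights orthogonal to
  \<open>(log |q|, log |u\<^sub>i|)\<close>, hence are trivial on this one-parameter subgroup; by duality it lies in \<open>H\<close>.\<close>

lemma one_param_in_Tqu:
  assumes q: "q \<noteq> 0" and u: "u \<in> torusC r"
  shows "one_param r (ln (cmod q)) (\<lambda>i. ln (cmod (u i))) t \<in> Tqu r q u"
  unfolding Tqu_def
proof (rule InterI, clarify)
  fix H assume H: "closed_subgroup_TT r H" and qu: "(q, u) \<in> complexify r H"
  show "one_param r (ln (cmod q)) (\<lambda>i. ln (cmod (u i))) t \<in> H"
  proof (rule ccontr)
    assume "one_param r (ln (cmod q)) (\<lambda>i. ln (cmod (u i))) t \<notin> H"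
    then obtain l where l: "\<forall>g\<in>H. character r l g = 1"
      "character r l (one_param r (ln (cmod q)) (\<lambda>i. ln (cmod (u i))) t) \<noteq> 1"
      using closed_subgroup_separated_by_character[OF H one_param_in_circle_torus] by blast
    have "chi r (fst l) (snd l) (q, u) = 1"
      using qu l(1) unfolding complexify_def character_def by blast
    then show False
      using l(2) log_norm_relation_if_chi_eq_1[OF q u] by (simp add: character_one_param)
  qed
qed

lemma fst_Tqu:
  assumes q: "0 < cmod q" "cmod q < 1" and u: "u \<in> torusC r"
  shows "fst ` Tqu r q u = circle"
proof
  show "fst ` Tqu r q u \<subseteq> circle"
    using Tqu_subset_circle_torus[OF _ u] q unfolding circle_torus_def by force
  show "circle \<subseteq> fst ` Tqu r q u"
  proof
    fix w assume "w \<in> circle"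
    then have "cmod w = 1" by (simp add: circle_def)
    then have w: "w = exp (\<i> * of_real (Arg w))"
      using Arg_eq[of w] by fastforce
    have "ln (cmod q) \<noteq> 0" using q by simp \<comment> \<open>the only use of \<open>cmod q \<noteq> 1\<close>\<close>
    then have "fst (one_param r (ln (cmod q)) (\<lambda>i. ln (cmod (u i))) (Arg w / ln (cmod q))) = w"
      using w by (simp add: one_param_def)
    then show "w \<in> fst ` Tqu r q u"
      using one_param_in_Tqu[OF _ u] q by (metis image_eqI zero_less_norm_iff)
  qed
qed

section \<open>The spaces \<open>X\<^sub>+\<close> and \<open>A \<and> B\<close>\<close>

lemma openin_plus_top:
  "openin (plus_top X) U \<longleftrightarrow> U \<subseteq> insert None (Some ` topspace X) \<and> openin X {x. Some x \<in> U}"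
proof -
  have "istopology (\<lambda>U. U \<subseteq> insert None (Some ` topspace X) \<and> openin X {x. Some x \<in> U})"
    unfolding istopology_def
  proof (rule conjI; intro allI impI)
    fix S T :: "'a option set"
    assume "S \<subseteq> insert None (Some ` topspace X) \<and> openin X {x. Some x \<in> S}"
      "T \<subseteq> insert None (Some ` topspace X) \<and> openin X {x. Some x \<in> T}"
    moreover have "{x. Some x \<in> S \<inter> T} = {x. Some x \<in> S} \<inter> {x. Some x \<in> T}" by auto
    ultimately show "S \<inter> T \<subseteq> insert None (Some ` topspace X) \<and> openin X {x. Some x \<in> S \<inter> T}"
      by auto
  next
    fix K :: "'a option set set"
    assume K: "\<forall>S\<in>K. S \<subseteq> insert None (Some ` topspace X) \<and> openin X {x. Some x \<in> S}"
    have "{x. Some x \<in> \<Union>K} = (\<Union>S\<in>K. {x. Some x \<in> S})" by auto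
    then show "\<Union>K \<subseteq> insert None (Some ` topspace X) \<and> openin X {x. Some x \<in> \<Union>K}"
      using K by auto
  qed
  then show ?thesis by (simp add: plus_top_def topology_inverse')
qed

lemma topspace_plus_top: "topspace (plus_top X) = insert None (Some ` topspace X)"
proof -
  have "{x. Some x \<in> insert None (Some ` topspace X)} = topspace X" by auto
  then have "openin (plus_top X) (insert None (Some ` topspace X))"
    by (simp add: openin_plus_top)
  then have "insert None (Some ` topspace X) \<subseteq> topspace (plus_top X)" by (rule openin_subset)
  moreover have "topspace (plus_top X) \<subseteq> insert None (Some ` topspace X)"
    using openin_topspace[of "plus_top X"] unfolding openin_plus_top by blast
  ultimately show ?thesis by blast
qed

lemma continuous_map_Some_plus_top: "continuous_map X (plus_top X) Some"
  unfolding continuous_map_def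
proof (intro conjI allI impI)
  show "Some \<in> topspace X \<rightarrow> topspace (plus_top X)" by (auto simp: topspace_plus_top)
  fix U assume U: "openin (plus_top X) U"
  then have "{x \<in> topspace X. Some x \<in> U} = {x. Some x \<in> U}" by (auto simp: openin_plus_top)
  then show "openin X {x \<in> topspace X. Some x \<in> U}" using U by (simp add: openin_plus_top)
qed

lemma openin_smash_top:
  "openin (smash_top A a0 B b0) U \<longleftrightarrow> U \<subseteq> smash_carrier (topspace A) a0 (topspace B) b0 \<and>
     openin (prod_topology A B) {p \<in> topspace (prod_topology A B). smash_proj a0 b0 p \<in> U}"
proof -
  let ?pre = "\<lambda>U. {p \<in> topspace (prod_topology A B). smash_proj a0 b0 p \<in> U}"
  have "istopology (\<lambda>U. U \<subseteq> smash_carrier (topspace A) a0 (topspace B) b0 \<and>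
      openin (prod_topology A B) (?pre U))"
    unfolding istopology_def
  proof (rule conjI; intro allI impI)
    fix S T
    assume "S \<subseteq> smash_carrier (topspace A) a0 (topspace B) b0 \<and> openin (prod_topology A B) (?pre S)"
      "T \<subseteq> smash_carrier (topspace A) a0 (topspace B) b0 \<and> openin (prod_topology A B) (?pre T)"
    moreover have "?pre (S \<inter> T) = ?pre S \<inter> ?pre T" by auto
    ultimately show "S \<inter> T \<subseteq> smash_carrier (topspace A) a0 (topspace B) b0 \<and>
        openin (prod_topology A B) (?pre (S \<inter> T))"
      by auto
  next
    fix K
    assume K: "\<forall>S\<in>K. S \<subseteq> smash_carrier (topspace A) a0 (topspace B) b0 \<and>
        openin (prod_topology A B) (?pre S)"
    have "?pre (\<Union>K) = (\<Union>S\<in>K. ?pre S)" by auto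
    then show "\<Union>K \<subseteq> smash_carrier (topspace A) a0 (topspace B) b0 \<and>
        openin (prod_topology A B) (?pre (\<Union>K))"
      using K by auto
  qed
  then show ?thesis by (simp add: smash_top_def topology_inverse')
qed

lemma smash_proj_in_smash_carrier: "p \<in> A \<times> B \<Longrightarrow> smash_proj a0 b0 p \<in> smash_carrier A a0 B b0"
  by (cases p) (auto simp: smash_proj_def smash_carrier_def)

lemma topspace_smash_top: "topspace (smash_top A a0 B b0) = smash_carrier (topspace A) a0 (topspace B) b0"
proof -
  have "{p \<in> topspace (prod_topology A B). smash_proj a0 b0 p \<in> smash_carrier (topspace A) a0 (topspace B) b0}
      = topspace (prod_topology A B)"
    using smash_proj_in_smash_carrier[of _ "topspace A" "topspace B"] by fastforce
  then have "openin (smash_top A a0 B b0) (smash_carrier (topspace A) a0 (topspace B) b0)"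
    using openin_topspace[of "prod_topology A B"] by (simp add: openin_smash_top)
  then have "smash_carrier (topspace A) a0 (topspace B) b0 \<subseteq> topspace (smash_top A a0 B b0)"
    by (rule openin_subset)
  moreover have "topspace (smash_top A a0 B b0) \<subseteq> smash_carrier (topspace A) a0 (topspace B) b0"
    using openin_topspace[of "smash_top A a0 B b0"] unfolding openin_smash_top by blast
  ultimately show ?thesis by blast
qed

lemma continuous_map_smash_proj: "continuous_map (prod_topology A B) (smash_top A a0 B b0) (smash_proj a0 b0)"
  using smash_proj_in_smash_carrier[of _ "topspace A" "topspace B"]
  by (auto simp: continuous_map_def topspace_smash_top openin_smash_top)

text \<open>Closedness of \<open>{a0}\<close> makes the slice \<open>(A - {a0}) \<and> X\<^sub>+\<close> open.\<close>

lemma continuous_map_smash_slice_iff: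
  assumes a0: "closedin A {a0}" and z: "z \<in> topspace A" "z \<noteq> a0"
  shows "continuous_map T (smash_top A a0 (plus_top X) None) (\<lambda>s. Some (z, Some (\<delta> s)))
     \<longleftrightarrow> continuous_map T X \<delta>"
    (is "continuous_map T ?S ?f \<longleftrightarrow> _")
proof
  assume f: "continuous_map T ?S ?f"
  show "continuous_map T X \<delta>"
    unfolding continuous_map_def
  proof (intro conjI allI impI)
    show "\<delta> \<in> topspace T \<rightarrow> topspace X"
      using continuous_map_image_subset_topspace[OF f]
      by (auto simp: topspace_smash_top topspace_plus_top smash_carrier_def)
    fix V assume V: "openin X V"
    let ?U = "Some ` ((topspace A - {a0}) \<times> Some ` V)"
    have "{x. Some x \<in> Some ` V} = V" by auto
    then have "openin (plus_top X) (Some ` V)"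
      using V openin_subset[OF V] by (auto simp: openin_plus_top)
    then have "openin (prod_topology A (plus_top X)) ((topspace A - {a0}) \<times> Some ` V)"
      using a0 by (simp add: openin_prod_Times_iff openin_diff)
    moreover have "{p \<in> topspace (prod_topology A (plus_top X)). smash_proj a0 None p \<in> ?U}
        = (topspace A - {a0}) \<times> Some ` V"
      using openin_subset[OF V] by (auto simp: smash_proj_def topspace_plus_top)
    ultimately have "openin ?S ?U"
      using openin_subset[OF V]
      by (auto simp: openin_smash_top smash_carrier_def topspace_plus_top)
    then have "openin T {s \<in> topspace T. ?f s \<in> ?U}"
      by (rule openin_continuous_map_preimage[OF f])
    moreover have "{s \<in> topspace T. ?f s \<in> ?U} = {s \<in> topspace T. \<delta> s \<in> V}"
      using z by auto
    ultimately show "openin T {s \<in> topspace T. \<delta> s \<in> V}" by simp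
  qed
next
  assume "continuous_map T X \<delta>"
  then have "continuous_map T (plus_top X) (Some \<circ> \<delta>)"
    by (rule continuous_map_compose[OF _ continuous_map_Some_plus_top])
  then have "continuous_map T (prod_topology A (plus_top X)) (\<lambda>s. (z, Some (\<delta> s)))"
    using z by (simp add: continuous_map_paired o_def)
  then have "continuous_map T ?S (smash_proj a0 None \<circ> (\<lambda>s. (z, Some (\<delta> s))))"
    by (rule continuous_map_compose[OF _ continuous_map_smash_proj])
  then show "continuous_map T ?S ?f"
    using z by (simp add: o_def smash_proj_def)
qed

section \<open>Invariant loops in \<open>S\<^sup>1 \<and> X\<^sub>+\<close>\<close>

lemma one_in_circle: "1 \<in> circle"
  by (simp add: circle_def)

lemma inverse_mul_in_circle: "w \<in> circle \<Longrightarrow> s \<in> circle \<Longrightarrow> inverse w * s \<in> circle"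
  by (simp add: circle_def norm_mult norm_inverse)

lemma loop_of_apply: "s \<in> circle \<Longrightarrow> loop_of f s = f s"
  by (simp add: loop_of_def)

lemma loop_of_idem [simp]: "loop_of (loop_of f) = loop_of f"
  by (simp add: loop_of_def fun_eq_iff)

lemma loop_of_eq_iff: "loop_of f = loop_of g \<longleftrightarrow> (\<forall>s\<in>circle. f s = g s)"
  by (auto simp: loop_of_def fun_eq_iff)

lemma loop_of_in_loops_iff: "loop_of f \<in> loops Z \<longleftrightarrow> continuous_map (top_of_set circle) Z f"
proof -
  have "continuous_map (top_of_set circle) Z (loop_of f) \<longleftrightarrow> continuous_map (top_of_set circle) Z f"
    using continuous_map_eq[of "top_of_set circle" Z f "loop_of f"]
      continuous_map_eq[of "top_of_set circle" Z "loop_of f" f]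
    by (auto simp: loop_of_apply)
  then show ?thesis by (simp add: loops_def)
qed

lemma loop_act_loop_of:
  "fst p \<in> circle \<Longrightarrow> loop_act act p (loop_of f) = loop_of (\<lambda>s. act (snd p) (f (inverse (fst p) * s)))"
  unfolding loop_act_def loop_of_eq_iff by (simp add: loop_of_apply inverse_mul_in_circle)

definition invariant_loops :: "(complex \<times> (nat \<Rightarrow> complex)) set \<Rightarrow> 'b topology
    \<Rightarrow> ((nat \<Rightarrow> complex) \<Rightarrow> 'b \<Rightarrow> 'b) \<Rightarrow> (complex \<Rightarrow> 'b) set" where
  "invariant_loops G Z act = {\<gamma> \<in> loops Z. \<forall>p\<in>G. loop_act act p \<gamma> = \<gamma>}"

lemma fixed_loops_eq_invariant_loops: "fixed_loops r Z act q u = invariant_loops (Tqu r q u) Z act"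
  by (simp add: fixed_loops_def invariant_loops_def)

lemma invariant_loop_orbit:
  assumes \<gamma>: "\<gamma> \<in> invariant_loops G Z act" and G: "fst ` G = circle"
    and s: "s \<in> circle" and s': "s' \<in> circle"
  obtains t where "\<gamma> s = act t (\<gamma> s')"
proof -
  have "s \<noteq> 0" "s' \<noteq> 0" using s s' by (auto simp: circle_def)
  moreover have "s / s' \<in> circle" using s s' by (simp add: circle_def norm_divide)
  ultimately obtain p where p: "p \<in> G" "fst p = s / s'"
    using G by (metis imageE)
  have shift: "inverse (fst p) * s = s'" using p(2) \<open>s \<noteq> 0\<close> by simp
  have "\<gamma> s = loop_act act p \<gamma> s" using \<gamma> p(1) by (simp add: invariant_loops_def)
  also have "\<dots> = act (snd p) (\<gamma> s')" using s shift by (simp add: loop_act_def loop_of_apply)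
  finally show ?thesis using that by blast
qed

lemma slice_loop_invariant_iff:
  assumes G: "fst ` G \<subseteq> circle" and z: "z \<in> circle" "z \<noteq> 1"
  shows "loop_of (\<lambda>s. Some (z, Some (\<delta> s)))
           \<in> invariant_loops G (smash_top (top_of_set circle) 1 (plus_top X) None) (smash_plus_act act)
     \<longleftrightarrow> loop_of \<delta> \<in> invariant_loops G X act"
proof -
  have "closedin (top_of_set circle) {1}" using one_in_circle by (simp add: closed_subset)
  then have loops: "loop_of (\<lambda>s. Some (z, Some (\<delta> s)))
        \<in> loops (smash_top (top_of_set circle) 1 (plus_top X) None) \<longleftrightarrow> loop_of \<delta> \<in> loops X"
    using z by (simp add: loop_of_in_loops_iff continuous_map_smash_slice_iff)
  have "loop_act (smash_plus_act act) p (loop_of (\<lambda>s. Some (z, Some (\<delta> s))))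
        = loop_of (\<lambda>s. Some (z, Some (\<delta> s)))
      \<longleftrightarrow> loop_act act p (loop_of \<delta>) = loop_of \<delta>" if "p \<in> G" for p
  proof -
    have "fst p \<in> circle" using that G by blast
    then show ?thesis by (simp add: loop_act_loop_of loop_of_eq_iff smash_plus_act_def)
  qed
  then show ?thesis using loops by (auto simp: invariant_loops_def)
qed

lemma topspace_smash_circle_plus:
  "topspace (smash_top (top_of_set circle) 1 (plus_top X) None)
     = insert None (Some ` ((circle - {1}) \<times> Some ` topspace X))"
  by (auto simp: topspace_smash_top topspace_plus_top smash_carrier_def)

lemma smash_loop_incl_invariant:
  assumes G: "fst ` G \<subseteq> circle"
  shows "smash_loop_incl ` smash_carrier circle 1 (insert None (Some ` invariant_loops G X act)) None
       \<subseteq> invariant_loops G (smash_top (top_of_set circle) 1 (plus_top X) None) (smash_plus_act act)"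
    (is "smash_loop_incl ` ?C \<subseteq> ?L")
proof
  fix \<gamma> assume "\<gamma> \<in> smash_loop_incl ` ?C"
  then obtain e where e: "e \<in> ?C" "\<gamma> = smash_loop_incl e" by blast
  show "\<gamma> \<in> ?L"
  proof (cases e)
    case None
    have "loop_of (\<lambda>s. None) \<in> loops (smash_top (top_of_set circle) 1 (plus_top X) None)"
      by (simp add: loop_of_in_loops_iff topspace_smash_circle_plus)
    moreover have "fst p \<in> circle" if "p \<in> G" for p using that G by blast
    ultimately show ?thesis
      using None e(2)
      by (simp add: smash_loop_incl_def invariant_loops_def loop_act_loop_of smash_plus_act_def)
  next
    case (Some a)
    then obtain z \<delta> where z\<delta>: "e = Some (z, Some \<delta>)" "z \<in> circle" "z \<noteq> 1"
        "\<delta> \<in> invariant_loops G X act"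
      using e(1) by (auto simp: smash_carrier_def)
    then have "\<delta> = loop_of \<delta>" by (simp add: invariant_loops_def loops_def)
    then show ?thesis
      using z\<delta> e(2) slice_loop_invariant_iff[OF G, of z \<delta> X act] by (simp add: smash_loop_incl_def)
  qed
qed

text \<open>A loop fixed by \<open>G\<close> stays in the \<open>T\<close>-orbit of its value at \<open>1\<close>, and \<open>T\<close> fixes the
  \<open>S\<^sup>1\<close>-coordinate of \<open>S\<^sup>1 \<and> X\<^sub>+\<close>.\<close>

lemma invariant_loop_smash_plus_cases:
  assumes G: "fst ` G = circle"
    and \<gamma>: "\<gamma> \<in> invariant_loops G (smash_top (top_of_set circle) 1 (plus_top X) None) (smash_plus_act act)"
  shows "\<gamma> \<in> smash_loop_incl ` smash_carrier circle 1 (insert None (Some ` invariant_loops G X act)) None"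
proof -
  have \<gamma>_loop: "\<gamma> = loop_of \<gamma>"
    and \<gamma>_cont: "continuous_map (top_of_set circle) (smash_top (top_of_set circle) 1 (plus_top X) None) \<gamma>"
    using \<gamma> by (auto simp: invariant_loops_def loops_def)
  have "\<gamma> 1 \<in> topspace (smash_top (top_of_set circle) 1 (plus_top X) None)"
    using continuous_map_image_subset_topspace[OF \<gamma>_cont] one_in_circle by auto
  then consider "\<gamma> 1 = None" | z x where "\<gamma> 1 = Some (z, Some x)" "z \<in> circle" "z \<noteq> 1"
    unfolding topspace_smash_circle_plus by auto
  then show ?thesis
  proof cases
    case 1
    have "\<gamma> s = None" if s: "s \<in> circle" for s
    proof -
      obtain t where "\<gamma> s = smash_plus_act act t (\<gamma> 1)"
        using invariant_loop_orbit[OF \<gamma> G s one_in_circle] .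
      then show ?thesis using 1 by (simp add: smash_plus_act_def)
    qed
    then have "loop_of \<gamma> = loop_of (\<lambda>s. None)" by (simp add: loop_of_eq_iff)
    then have "\<gamma> = smash_loop_incl None" using \<gamma>_loop by (simp add: smash_loop_incl_def)
    then show ?thesis by (simp add: smash_carrier_def)
  next
    case (2 z x)
    define \<delta> where "\<delta> s = the (snd (the (\<gamma> s)))" for s
    have "\<gamma> s = Some (z, Some (\<delta> s))" if s: "s \<in> circle" for s
    proof -
      obtain t where "\<gamma> s = smash_plus_act act t (\<gamma> 1)"
        using invariant_loop_orbit[OF \<gamma> G s one_in_circle] .
      then show ?thesis using 2(1) by (simp add: smash_plus_act_def \<delta>_def)
    qed
    then have "loop_of \<gamma> = loop_of (\<lambda>s. Some (z, Some (loop_of \<delta> s)))"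
      by (simp add: loop_of_eq_iff loop_of_apply)
    then have \<gamma>_slice: "\<gamma> = smash_loop_incl (Some (z, Some (loop_of \<delta>)))"
      using \<gamma>_loop by (simp add: smash_loop_incl_def)
    then have "loop_of \<delta> \<in> invariant_loops G X act"
      using \<gamma> slice_loop_invariant_iff[of G z "loop_of \<delta>" X act] G 2(2,3)
      by (simp add: smash_loop_incl_def)
    then show ?thesis
      using \<gamma>_slice 2(2,3) by (simp add: smash_carrier_def)
  qed
qed

theorem invariant_loops_smash_plus:
  assumes "fst ` G = circle"
  shows "invariant_loops G (smash_top (top_of_set circle) 1 (plus_top X) None) (smash_plus_act act)
       = smash_loop_incl ` smash_carrier circle 1 (insert None (Some ` invariant_loops G X act)) None"
    (is "?L = ?R")
proof
  show "?L \<subseteq> ?R" by (rule subsetI, rule invariant_loop_smash_plus_cases[OF assms])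
  show "?R \<subseteq> ?L" by (rule smash_loop_incl_invariant) (simp add: assms)
qed

theorem mainTheorem18:
  fixes r :: nat and X :: "'a topology" and act :: "(nat \<Rightarrow> complex) \<Rightarrow> 'a \<Rightarrow> 'a"
    and q :: complex and u :: "nat \<Rightarrow> complex"
  assumes "finite_TCW r X act"
    and "0 < cmod q" and "cmod q < 1"
    and "u \<in> torusC r"
  shows "fixed_loops r (smash_top (top_of_set circle) 1 (plus_top X) None) (smash_plus_act act) q u
       = smash_loop_incl ` smash_carrier circle 1 (insert None (Some ` fixed_loops r X act q u)) None"
  using invariant_loops_smash_plus[OF fst_Tqu[OF assms(2-4)]]
  by (simp add: fixed_loops_eq_invariant_loops)

end
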